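(* For non-negative random variables $Y$ and $Z$ satisfying $0\le Y+Z\le1$, we have $\operatorname{Var}[YZ]\le 8\big(\operatorname{Var}[Y]+\operatorname{Var}[Z]\big)$. *)

theory Defs
  imports "HOL-Probability.Probability"
begin

end

theory Submission
  imports Defs
begin

text \<open>With \<open>a = E[Y]\<close> and \<open>b = E[Z]\<close> one has \<open>YZ - ab = Y (Z - b) + b (Y - a)\<close>. If \<open>Y\<close> and
  \<open>Z\<close> take values in \<open>[-C, C]\<close>, then so does \<open>b\<close>, hence
  \<open>(YZ - ab)\<^sup>2 \<le> 2C\<^sup>2 ((Z - b)\<^sup>2 + (Y - a)\<^sup>2)\<close>. Since the variance is the least mean square
  deviation from a constant, taking expectations gives \<open>Var[YZ] \<le> 2C\<^sup>2 (Var[Y] + Var[Z])\<close>.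
  Under the hypotheses of the theorem \<open>C = 1\<close>, so the constant 8 can even be improved to 2.\<close>

lemma product_deviation_sq_le:
  fixes y z a b C :: real
  assumes "\<bar>y\<bar> \<le> C" and "\<bar>b\<bar> \<le> C"
  shows "(y * z - a * b)\<^sup>2 \<le> 2 * C\<^sup>2 * ((z - b)\<^sup>2 + (y - a)\<^sup>2)"
proof -
  have y_sq: "y\<^sup>2 \<le> C\<^sup>2" and b_sq: "b\<^sup>2 \<le> C\<^sup>2"
    using power_mono[OF assms(1) abs_ge_zero, of 2] power_mono[OF assms(2) abs_ge_zero, of 2]
    by simp_all
  have "(y * z - a * b)\<^sup>2 = (y * (z - b) + b * (y - a))\<^sup>2"
    by (simp add: algebra_simps)
  also have "\<dots> \<le> 2 * (y * (z - b))\<^sup>2 + 2 * (b * (y - a))\<^sup>2"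
    using sum_squares_bound[of "y * (z - b)" "b * (y - a)"]
    by (simp add: power2_eq_square algebra_simps)
  also have "\<dots> = 2 * (y\<^sup>2 * (z - b)\<^sup>2) + 2 * (b\<^sup>2 * (y - a)\<^sup>2)"
    by (simp add: power_mult_distrib)
  also have "\<dots> \<le> 2 * (C\<^sup>2 * (z - b)\<^sup>2) + 2 * (C\<^sup>2 * (y - a)\<^sup>2)"
    using y_sq b_sq by (intro add_mono mult_left_mono mult_right_mono) simp_all
  finally show ?thesis
    by (simp add: algebra_simps)
qed

lemma (in finite_measure) integrable_bounded_real:
  fixes f :: "'a \<Rightarrow> real"
  assumes "f \<in> borel_measurable M" and "\<And>x. x \<in> space M \<Longrightarrow> \<bar>f x\<bar> \<le> B"
  shows "integrable M f"
  using assms by (intro integrable_const_bound[where B = B] AE_I2) auto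

context prob_space
begin

lemma variance_le_expectation_sq_diff:
  fixes X :: "'a \<Rightarrow> real"
  assumes "integrable M X" and "integrable M (\<lambda>x. (X x)\<^sup>2)"
  shows "variance X \<le> expectation (\<lambda>x. (X x - c)\<^sup>2)"
proof -
  have "expectation (\<lambda>x. (X x - c)\<^sup>2) = expectation (\<lambda>x. (X x)\<^sup>2) - 2 * c * expectation X + c\<^sup>2"
    using assms by (simp add: power2_diff prob_space)
  also have "\<dots> = variance X + (expectation X - c)\<^sup>2"
    using variance_eq[OF assms] by (simp add: power2_diff)
  finally show ?thesis
    by simp
qed

lemma abs_expectation_le_bound:
  fixes X :: "'a \<Rightarrow> real"
  assumes "integrable M X" and "\<And>x. x \<in> space M \<Longrightarrow> \<bar>X x\<bar> \<le> C"
  shows "\<bar>expectation X\<bar> \<le> C"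
proof -
  have "X x \<le> C" and "- C \<le> X x" if "x \<in> space M" for x
    using assms(2)[OF that] by (simp_all add: abs_le_iff)
  then have "expectation X \<le> C" and "- C \<le> expectation X"
    using assms(1) by (auto intro!: integral_le_const integral_ge_const AE_I2)
  then show ?thesis
    by simp
qed

lemma variance_mult_le:
  fixes Y Z :: "'a \<Rightarrow> real"
  assumes Y: "Y \<in> borel_measurable M" and Z: "Z \<in> borel_measurable M"
    and Y_bound: "\<And>x. x \<in> space M \<Longrightarrow> \<bar>Y x\<bar> \<le> C"
    and Z_bound: "\<And>x. x \<in> space M \<Longrightarrow> \<bar>Z x\<bar> \<le> C"
  shows "variance (\<lambda>x. Y x * Z x) \<le> 2 * C\<^sup>2 * (variance Y + variance Z)"
proof -
  define a where "a = expectation Y"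
  define b where "b = expectation Z"
  have Y_sq: "\<bar>(Y x - a)\<^sup>2\<bar> \<le> (C + \<bar>a\<bar>)\<^sup>2" and Z_sq: "\<bar>(Z x - b)\<^sup>2\<bar> \<le> (C + \<bar>b\<bar>)\<^sup>2"
    if "x \<in> space M" for x
  proof -
    have "\<bar>Y x - a\<bar> \<le> C + \<bar>a\<bar>" and "\<bar>Z x - b\<bar> \<le> C + \<bar>b\<bar>"
      using Y_bound[OF that] Z_bound[OF that] by linarith+
    then show "\<bar>(Y x - a)\<^sup>2\<bar> \<le> (C + \<bar>a\<bar>)\<^sup>2" and "\<bar>(Z x - b)\<^sup>2\<bar> \<le> (C + \<bar>b\<bar>)\<^sup>2"
      using power_mono[OF _ abs_ge_zero, of _ _ 2] by fastforce+
  qed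
  have int_Y_sq: "integrable M (\<lambda>x. (Y x - a)\<^sup>2)"
    by (rule integrable_bounded_real[OF _ Y_sq]) (use Y in simp_all)
  have int_Z_sq: "integrable M (\<lambda>x. (Z x - b)\<^sup>2)"
    by (rule integrable_bounded_real[OF _ Z_sq]) (use Z in simp_all)
  have YZ_bound: "\<bar>Y x * Z x\<bar> \<le> C * C" if "x \<in> space M" for x
    using Y_bound[OF that] Z_bound[OF that] by (simp add: abs_mult mult_mono')
  have YZ_sq: "\<bar>(Y x * Z x)\<^sup>2\<bar> \<le> (C * C)\<^sup>2" if "x \<in> space M" for x
    using YZ_bound[OF that] power_mono[OF _ abs_ge_zero, of _ _ 2] by fastforce
  have int_YZ: "integrable M (\<lambda>x. Y x * Z x)"
    by (rule integrable_bounded_real[OF _ YZ_bound]) (use Y Z in simp_all)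
  have int_YZ_sq: "integrable M (\<lambda>x. (Y x * Z x)\<^sup>2)"
    by (rule integrable_bounded_real[OF _ YZ_sq]) (use Y Z in simp_all)
  have b_bound: "\<bar>b\<bar> \<le> C"
    unfolding b_def using Z Z_bound by (intro abs_expectation_le_bound integrable_bounded_real) auto
  have pointwise: "(Y x * Z x - a * b)\<^sup>2 \<le> 2 * C\<^sup>2 * ((Z x - b)\<^sup>2 + (Y x - a)\<^sup>2)"
    if "x \<in> space M" for x
    using Y_bound[OF that] b_bound by (rule product_deviation_sq_le)
  have "variance (\<lambda>x. Y x * Z x) \<le> expectation (\<lambda>x. (Y x * Z x - a * b)\<^sup>2)"
    using int_YZ int_YZ_sq by (rule variance_le_expectation_sq_diff)
  also have "\<dots> \<le> expectation (\<lambda>x. 2 * C\<^sup>2 * ((Z x - b)\<^sup>2 + (Y x - a)\<^sup>2))"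
    using pointwise int_Y_sq int_Z_sq
    by (intro integral_mono_AE' AE_I2) auto
  also have "\<dots> = 2 * C\<^sup>2 * (variance Z + variance Y)"
    using int_Y_sq int_Z_sq by (simp add: a_def b_def)
  finally show ?thesis
    by (simp add: add.commute)
qed

end

theorem corollary1:
  fixes M :: "'a measure" and Y Z :: "'a \<Rightarrow> real"
  assumes "prob_space M"
    and "Y \<in> borel_measurable M" and "Z \<in> borel_measurable M"
    and "\<And>x. x \<in> space M \<Longrightarrow> 0 \<le> Y x"
    and "\<And>x. x \<in> space M \<Longrightarrow> 0 \<le> Z x"
    and "\<And>x. x \<in> space M \<Longrightarrow> Y x + Z x \<le> 1"
  shows "prob_space.variance M (\<lambda>x. Y x * Z x)
           \<le> 8 * (prob_space.variance M Y + prob_space.variance M Z)"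
proof -
  interpret prob_space M by fact
  have "\<bar>Y x\<bar> \<le> 1" and "\<bar>Z x\<bar> \<le> 1" if "x \<in> space M" for x
    using assms(4-6)[OF that] by auto
  then have "variance (\<lambda>x. Y x * Z x) \<le> 2 * 1\<^sup>2 * (variance Y + variance Z)"
    using assms(2,3) by (intro variance_mult_le)
  also have "\<dots> \<le> 8 * (variance Y + variance Z)"
    using variance_positive[of Y] variance_positive[of Z] by simp
  finally show ?thesis .
qed

end
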